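(* Assume (A1)–(A3) below. For any positive definite $L\times L$ matrix $W$, the GMM estimator $\hat\beta_W$ satisfies $\hat\beta_W\xrightarrow{p}\beta^*(W)$, where $$\beta^*(W)=\sum_{\ell=1}^L\lambda_\ell(W)\,\mathrm{Wald}_\ell,\qquad \lambda_\ell(W)=\frac{\gamma_\ell\,[W\boldsymbol\gamma]_\ell}{\boldsymbol\gamma'W\boldsymbol\gamma},$$ and $\sum_{\ell=1}^L\lambda_\ell(W)=1$.
   Context: We observe an i.i.d. sample $\{(Y_i,D_i,Z_{1i},\dots,Z_{Li})\}_{i=1}^n$ with $Y_i\in\mathbb R$, $D_i\in\{0,1\}$, $Z_{\ell i}\in\{0,1\}$, $L\ge2$; $\mathbf Z_i=(Z_{1i},\dots,Z_{Li})'$. Units have potential outcomes $Y_i(0),Y_i(1)$ and a compliance type $D_i(\cdot):\{0,1\}^L\to\{0,1\}$, with $D_i=D_i(\mathbf Z_i)$, $Y_i=D_iY_i(1)+(1-D_i)Y_i(0)$. $p_\ell=P(Z_{\ell i}=1)$, $\pi_\ell=\mathbb E[D_i\mid Z_{\ell i}=1]-\mathbb E[D_i\mid Z_{\ell i}=0]$, $\rho_\ell=\mathbb E[Y_i\mid Z_{\ell i}=1]-\mathbb E[Y_i\mid Z_{\ell i}=0]$, $\mathrm{Wald}_\ell=\rho_\ell/\pi_\ell$, $\gamma_\ell=\mathrm{Cov}(D_i,Z_{\ell i})=\pi_\ell p_\ell(1-p_\ell)$, $\boldsymbol\gamma=(\gamma_1,\dots,\gamma_L)'$, $\Sigma_Z=\mathrm{Var}(\mathbf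 Z_i)$. With $\hat p_\ell=n^{-1}\sum_iZ_{\ell i}$ and $g_{n,\ell}(\beta)=n^{-1}\sum_i(Y_i-\beta D_i)(Z_{\ell i}-\hat p_\ell)$, $g_n=(g_{n,1},\dots,g_{n,L})'$, the GMM estimator is $\hat\beta_W=\arg\min_\beta g_n(\beta)'Wg_n(\beta)$. Assumptions: (A1) $(Y_i(0),Y_i(1),D_i(\cdot))$ independent of $\mathbf Z_i$. (A2) $D_i(z)$ nondecreasing in each coordinate for every $i$. (A3) $p_\ell>0$, $\pi_\ell>0$ for all $\ell$; $\Sigma_Z$ positive definite. *)

theory Defs
  imports "HOL-Probability.Probability"
begin

text \<open>Instrument vectors z in {0,1}^L are encoded as predicates on nat that are
  False outside the index range 0..L-1 (coordinate l-1 of the paper is index l here).\<close>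
definition zspace :: "nat \<Rightarrow> (nat \<Rightarrow> bool) set" where
  "zspace L = {z. \<forall>l\<ge>L. \<not> z l}"

text \<open>Measurable space of one unit: ((Y(0),Y(1)), compliance type D(.), instrument vector Z).\<close>
definition unit_space ::
  "((real \<times> real) \<times> ((nat \<Rightarrow> bool) \<Rightarrow> bool) \<times> (nat \<Rightarrow> bool)) measure" where
  "unit_space = (borel \<Otimes>\<^sub>M borel) \<Otimes>\<^sub>M (count_space UNIV \<Otimes>\<^sub>M count_space UNIV)"

definition unit_var ::
  "(nat \<Rightarrow> 'a \<Rightarrow> real) \<Rightarrow> (nat \<Rightarrow> 'a \<Rightarrow> real) \<Rightarrow> (nat \<Rightarrow> 'a \<Rightarrow> (nat \<Rightarrow> bool) \<Rightarrow> bool)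
    \<Rightarrow> (nat \<Rightarrow> 'a \<Rightarrow> nat \<Rightarrow> bool) \<Rightarrow> nat \<Rightarrow> 'a
    \<Rightarrow> (real \<times> real) \<times> ((nat \<Rightarrow> bool) \<Rightarrow> bool) \<times> (nat \<Rightarrow> bool)" where
  "unit_var Y0 Y1 Dt Z i \<omega> = ((Y0 i \<omega>, Y1 i \<omega>), Dt i \<omega>, Z i \<omega>)"

definition Dobs :: "(nat \<Rightarrow> 'a \<Rightarrow> (nat \<Rightarrow> bool) \<Rightarrow> bool) \<Rightarrow> (nat \<Rightarrow> 'a \<Rightarrow> nat \<Rightarrow> bool)
    \<Rightarrow> nat \<Rightarrow> 'a \<Rightarrow> real" where
  "Dobs Dt Z i \<omega> = (if Dt i \<omega> (Z i \<omega>) then 1 else 0)"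

definition Yobs :: "(nat \<Rightarrow> 'a \<Rightarrow> real) \<Rightarrow> (nat \<Rightarrow> 'a \<Rightarrow> real)
    \<Rightarrow> (nat \<Rightarrow> 'a \<Rightarrow> (nat \<Rightarrow> bool) \<Rightarrow> bool) \<Rightarrow> (nat \<Rightarrow> 'a \<Rightarrow> nat \<Rightarrow> bool)
    \<Rightarrow> nat \<Rightarrow> 'a \<Rightarrow> real" where
  "Yobs Y0 Y1 Dt Z i \<omega> = Dobs Dt Z i \<omega> * Y1 i \<omega> + (1 - Dobs Dt Z i \<omega>) * Y0 i \<omega>"

definition Zobs :: "(nat \<Rightarrow> 'a \<Rightarrow> nat \<Rightarrow> bool) \<Rightarrow> nat \<Rightarrow> 'a \<Rightarrow> nat \<Rightarrow> real" where
  "Zobs Z i \<omega> l = (if Z i \<omega> l then 1 else 0)"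

definition cond_mean :: "'a measure \<Rightarrow> ('a \<Rightarrow> real) \<Rightarrow> 'a set \<Rightarrow> real" where
  "cond_mean M X A = (\<integral>\<omega>. indicator A \<omega> * X \<omega> \<partial>M) / measure M A"

definition pZ :: "'a measure \<Rightarrow> ('a \<Rightarrow> nat \<Rightarrow> real) \<Rightarrow> nat \<Rightarrow> real" where
  "pZ M Zv l = measure M {\<omega> \<in> space M. Zv \<omega> l = 1}"

definition diffZ :: "'a measure \<Rightarrow> ('a \<Rightarrow> real) \<Rightarrow> ('a \<Rightarrow> nat \<Rightarrow> real) \<Rightarrow> nat \<Rightarrow> real" where
  "diffZ M X Zv l = cond_mean M X {\<omega> \<in> space M. Zv \<omega> l = 1}
                   - cond_mean M X {\<omega> \<in> space M. Zv \<omega> l = 0}"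

definition piZ :: "'a measure \<Rightarrow> ('a \<Rightarrow> real) \<Rightarrow> ('a \<Rightarrow> nat \<Rightarrow> real) \<Rightarrow> nat \<Rightarrow> real" where
  "piZ M D Zv l = diffZ M D Zv l"

definition rhoZ :: "'a measure \<Rightarrow> ('a \<Rightarrow> real) \<Rightarrow> ('a \<Rightarrow> nat \<Rightarrow> real) \<Rightarrow> nat \<Rightarrow> real" where
  "rhoZ M Y Zv l = diffZ M Y Zv l"

definition wald :: "'a measure \<Rightarrow> ('a \<Rightarrow> real) \<Rightarrow> ('a \<Rightarrow> real) \<Rightarrow> ('a \<Rightarrow> nat \<Rightarrow> real) \<Rightarrow> nat \<Rightarrow> real" where
  "wald M Y D Zv l = rhoZ M Y Zv l / piZ M D Zv l"

definition gammaZ :: "'a measure \<Rightarrow> ('a \<Rightarrow> real) \<Rightarrow> ('a \<Rightarrow> nat \<Rightarrow> real) \<Rightarrow> nat \<Rightarrow> real" where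
  "gammaZ M D Zv l = piZ M D Zv l * pZ M Zv l * (1 - pZ M Zv l)"

definition covZ :: "'a measure \<Rightarrow> ('a \<Rightarrow> nat \<Rightarrow> real) \<Rightarrow> nat \<Rightarrow> nat \<Rightarrow> real" where
  "covZ M Zv l m = (\<integral>\<omega>. Zv \<omega> l * Zv \<omega> m \<partial>M) - (\<integral>\<omega>. Zv \<omega> l \<partial>M) * (\<integral>\<omega>. Zv \<omega> m \<partial>M)"

definition posdef :: "nat \<Rightarrow> (nat \<Rightarrow> nat \<Rightarrow> real) \<Rightarrow> bool" where
  "posdef L W \<longleftrightarrow> (\<forall>l<L. \<forall>m<L. W l m = W m l) \<and>
     (\<forall>x::nat \<Rightarrow> real. (\<exists>l<L. x l \<noteq> 0) \<longrightarrow> 0 < (\<Sum>l<L. \<Sum>m<L. x l * W l m * x m))"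

definition lam :: "nat \<Rightarrow> (nat \<Rightarrow> nat \<Rightarrow> real) \<Rightarrow> (nat \<Rightarrow> real) \<Rightarrow> nat \<Rightarrow> real" where
  "lam L W g l = g l * (\<Sum>m<L. W l m * g m) / (\<Sum>k<L. \<Sum>m<L. g k * W k m * g m)"

definition beta_star :: "nat \<Rightarrow> (nat \<Rightarrow> nat \<Rightarrow> real) \<Rightarrow> (nat \<Rightarrow> real) \<Rightarrow> (nat \<Rightarrow> real) \<Rightarrow> real" where
  "beta_star L W g wd = (\<Sum>l<L. lam L W g l * wd l)"

definition phat :: "(nat \<Rightarrow> 'a \<Rightarrow> nat \<Rightarrow> real) \<Rightarrow> nat \<Rightarrow> 'a \<Rightarrow> nat \<Rightarrow> real" where
  "phat Zv n \<omega> l = (\<Sum>i<n. Zv i \<omega> l) / real n"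

definition gn :: "(nat \<Rightarrow> 'a \<Rightarrow> real) \<Rightarrow> (nat \<Rightarrow> 'a \<Rightarrow> real) \<Rightarrow> (nat \<Rightarrow> 'a \<Rightarrow> nat \<Rightarrow> real)
    \<Rightarrow> nat \<Rightarrow> 'a \<Rightarrow> real \<Rightarrow> nat \<Rightarrow> real" where
  "gn Y D Zv n \<omega> \<beta> l = (\<Sum>i<n. (Y i \<omega> - \<beta> * D i \<omega>) * (Zv i \<omega> l - phat Zv n \<omega> l)) / real n"

definition gmm_obj :: "nat \<Rightarrow> (nat \<Rightarrow> nat \<Rightarrow> real) \<Rightarrow> (nat \<Rightarrow> 'a \<Rightarrow> real) \<Rightarrow> (nat \<Rightarrow> 'a \<Rightarrow> real)
    \<Rightarrow> (nat \<Rightarrow> 'a \<Rightarrow> nat \<Rightarrow> real) \<Rightarrow> nat \<Rightarrow> 'a \<Rightarrow> real \<Rightarrow> real" where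
  "gmm_obj L W Y D Zv n \<omega> \<beta> =
     (\<Sum>l<L. \<Sum>m<L. gn Y D Zv n \<omega> \<beta> l * W l m * gn Y D Zv n \<omega> \<beta> m)"

definition gmm_est :: "nat \<Rightarrow> (nat \<Rightarrow> nat \<Rightarrow> real) \<Rightarrow> (nat \<Rightarrow> 'a \<Rightarrow> real) \<Rightarrow> (nat \<Rightarrow> 'a \<Rightarrow> real)
    \<Rightarrow> (nat \<Rightarrow> 'a \<Rightarrow> nat \<Rightarrow> real) \<Rightarrow> nat \<Rightarrow> 'a \<Rightarrow> real" where
  "gmm_est L W Y D Zv n \<omega> = (SOME \<beta>. is_arg_min (gmm_obj L W Y D Zv n \<omega>) (\<lambda>_. True) \<beta>)"

text \<open>Independence of two random elements with (possibly different) value spaces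
  (textbook definition via events; the library's indep_var requires equal value types).\<close>
definition indep_rv :: "'a measure \<Rightarrow> 'b measure \<Rightarrow> ('a \<Rightarrow> 'b) \<Rightarrow> 'c measure \<Rightarrow> ('a \<Rightarrow> 'c) \<Rightarrow> bool" where
  "indep_rv M N1 X N2 Y \<longleftrightarrow> X \<in> measurable M N1 \<and> Y \<in> measurable M N2 \<and>
     (\<forall>A\<in>sets N1. \<forall>B\<in>sets N2.
        measure M (X -` A \<inter> Y -` B \<inter> space M) = measure M (X -` A \<inter> space M) * measure M (Y -` B \<inter> space M))"

definition conv_in_prob :: "'a measure \<Rightarrow> (nat \<Rightarrow> 'a \<Rightarrow> real) \<Rightarrow> real \<Rightarrow> bool" where
  "conv_in_prob M X c \<longleftrightarrow> (\<forall>n. X n \<in> borel_measurable M) \<and>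
     (\<forall>e>0. (\<lambda>n. measure M {\<omega> \<in> space M. \<bar>X n \<omega> - c\<bar> > e}) \<longlonglongrightarrow> 0)"

end

(* Since g_n(beta) = a_n - beta b_n, where a_n and b_n are the vectors of sample covariances of
   Y and of D with the instruments, the GMM objective is a quadratic polynomial in beta, and
   beta_W = a_n' W b_n / b_n' W b_n on the event b_n' W b_n > 0.  A weak law of large numbers
   (proved by truncation, as only E|Y| < oo is assumed) and the continuous mapping theorem give
   a_n -> c = Cov(Y, Z) and b_n -> Cov(D, Z) = gamma in probability, hence
   beta_W -> c' W gamma / gamma' W gamma.  For a binary instrument
   Cov(X, Z_l) = (E[X | Z_l = 1] - E[X | Z_l = 0]) p_l (1 - p_l), so c_l = Wald_l gamma_l, which
   turns the limit into sum_l lambda_l(W) Wald_l; the weights sum to one by their definition. *)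

theory Submission
  imports Defs
begin

section \<open>Convergence in probability\<close>

lemma conv_in_prob_const: "conv_in_prob M (\<lambda>n \<omega>. c) c"
  unfolding conv_in_prob_def by simp

lemma conv_in_prob_continuous2:
  fixes F :: "real \<Rightarrow> real \<Rightarrow> real"
  assumes "prob_space M"
    and X: "conv_in_prob M X c" and Y: "conv_in_prob M Y d"
    and F_cont: "isCont (case_prod F) (c, d)"
    and F_meas: "case_prod F \<in> borel_measurable (borel \<Otimes>\<^sub>M borel)"
  shows "conv_in_prob M (\<lambda>n \<omega>. F (X n \<omega>) (Y n \<omega>)) (F c d)"
proof -
  interpret prob_space M by fact
  have [measurable]: "X n \<in> borel_measurable M" "Y n \<in> borel_measurable M" for n
    using X Y by (auto simp: conv_in_prob_def)
  have meas: "(\<lambda>\<omega>. F (X n \<omega>) (Y n \<omega>)) \<in> borel_measurable M" for n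
    using measurable_compose[OF measurable_Pair[of "X n" M borel "Y n" borel] F_meas] by simp
  have "(\<lambda>n. prob {\<omega> \<in> space M. e < \<bar>F (X n \<omega>) (Y n \<omega>) - F c d\<bar>}) \<longlonglongrightarrow> 0" if "e > 0" for e
  proof -
    obtain r where "r > 0" and r: "\<And>p. dist p (c, d) < r \<Longrightarrow> \<bar>case_prod F p - F c d\<bar> < e"
      using F_cont \<open>e > 0\<close> unfolding continuous_at_eps_delta dist_real_def by fastforce
    have "{\<omega> \<in> space M. e < \<bar>F (X n \<omega>) (Y n \<omega>) - F c d\<bar>}
        \<subseteq> {\<omega> \<in> space M. r/3 < \<bar>X n \<omega> - c\<bar>} \<union> {\<omega> \<in> space M. r/3 < \<bar>Y n \<omega> - d\<bar>}" for n
    proof safe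
      fix \<omega> assume "e < \<bar>F (X n \<omega>) (Y n \<omega>) - F c d\<bar>" "\<not> r/3 < \<bar>Y n \<omega> - d\<bar>"
      moreover have "dist (X n \<omega>, Y n \<omega>) (c, d) \<le> \<bar>X n \<omega> - c\<bar> + \<bar>Y n \<omega> - d\<bar>"
        using norm_Pair_le[of "X n \<omega> - c" "Y n \<omega> - d"] by (simp add: dist_norm)
      ultimately show "r/3 < \<bar>X n \<omega> - c\<bar>"
        using r[of "(X n \<omega>, Y n \<omega>)"] \<open>r > 0\<close> by fastforce
    qed
    then have bound: "prob {\<omega> \<in> space M. e < \<bar>F (X n \<omega>) (Y n \<omega>) - F c d\<bar>}
        \<le> prob {\<omega> \<in> space M. r/3 < \<bar>X n \<omega> - c\<bar>} + prob {\<omega> \<in> space M. r/3 < \<bar>Y n \<omega> - d\<bar>}" for n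
      by (intro order.trans[OF finite_measure_mono measure_Un_le]) (use meas in measurable)
    from \<open>r > 0\<close> have "r/3 > 0"
      by simp
    then have "(\<lambda>n. prob {\<omega> \<in> space M. r/3 < \<bar>X n \<omega> - c\<bar>}) \<longlonglongrightarrow> 0"
      and "(\<lambda>n. prob {\<omega> \<in> space M. r/3 < \<bar>Y n \<omega> - d\<bar>}) \<longlonglongrightarrow> 0"
      using X Y unfolding conv_in_prob_def by blast+
    from tendsto_add[OF this] have lim: "(\<lambda>n. prob {\<omega> \<in> space M. r/3 < \<bar>X n \<omega> - c\<bar>}
        + prob {\<omega> \<in> space M. r/3 < \<bar>Y n \<omega> - d\<bar>}) \<longlonglongrightarrow> 0"
      by simp
    show ?thesis
      by (rule tendsto_sandwich[OF _ _ tendsto_const lim])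
        (simp_all only: bound measure_nonneg eventually_True)
  qed
  with meas show ?thesis
    by (simp add: conv_in_prob_def)
qed

lemma conv_in_prob_add:
  assumes "prob_space M" "conv_in_prob M X c" "conv_in_prob M Y d"
  shows "conv_in_prob M (\<lambda>n \<omega>. X n \<omega> + Y n \<omega>) (c + d)"
  using conv_in_prob_continuous2[OF assms, of "(+)"] by (simp add: case_prod_beta' continuous_intros)

lemma conv_in_prob_diff:
  assumes "prob_space M" "conv_in_prob M X c" "conv_in_prob M Y d"
  shows "conv_in_prob M (\<lambda>n \<omega>. X n \<omega> - Y n \<omega>) (c - d)"
  using conv_in_prob_continuous2[OF assms, of "(-)"] by (simp add: case_prod_beta' continuous_intros)

lemma conv_in_prob_mult:
  assumes "prob_space M" "conv_in_prob M X c" "conv_in_prob M Y d"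
  shows "conv_in_prob M (\<lambda>n \<omega>. X n \<omega> * Y n \<omega>) (c * d)"
  using conv_in_prob_continuous2[OF assms, of "(*)"] by (simp add: case_prod_beta' continuous_intros)

lemma conv_in_prob_divide_guarded:
  assumes "prob_space M" "conv_in_prob M X c" "conv_in_prob M Y d" "0 < d"
  shows "conv_in_prob M (\<lambda>n \<omega>. if 0 < Y n \<omega> then X n \<omega> / Y n \<omega> else z) (c / d)"
proof -
  have "\<forall>\<^sub>F p in nhds (c, d). (if 0 < snd p then fst p / snd p else z) = fst p / snd p"
    using eventually_nhds_in_open[of "{p. 0 < snd p}" "(c, d)"] \<open>0 < d\<close>
    by (auto simp: open_Collect_less continuous_intros elim!: eventually_mono)
  then have "isCont (\<lambda>(u, v). if 0 < v then u / v else z) (c, d)"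
    using \<open>0 < d\<close> by (simp add: case_prod_beta' isCont_cong continuous_intros)
  from conv_in_prob_continuous2[OF assms(1-3) this] \<open>0 < d\<close> show ?thesis
    by simp
qed

lemma conv_in_prob_sum:
  assumes "prob_space M" "finite S" "\<And>k. k \<in> S \<Longrightarrow> conv_in_prob M (X k) (c k)"
  shows "conv_in_prob M (\<lambda>n \<omega>. \<Sum>k\<in>S. X k n \<omega>) (\<Sum>k\<in>S. c k)"
  using assms(2,3)
proof (induction S rule: finite_induct)
  case empty
  then show ?case
    by (simp add: conv_in_prob_const)
next
  case (insert k S)
  then show ?case
    using conv_in_prob_add[OF assms(1), of "X k" "c k" "\<lambda>n \<omega>. \<Sum>k\<in>S. X k n \<omega>"] by simp
qed

section \<open>The weak law of large numbers\<close>

definition sample_mean :: "(nat \<Rightarrow> 'a \<Rightarrow> real) \<Rightarrow> nat \<Rightarrow> 'a \<Rightarrow> real" where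
  "sample_mean X n \<omega> = (\<Sum>i<n. X i \<omega>) / n"

definition sample_cov :: "(nat \<Rightarrow> 'a \<Rightarrow> real) \<Rightarrow> (nat \<Rightarrow> 'a \<Rightarrow> real) \<Rightarrow> nat \<Rightarrow> 'a \<Rightarrow> real" where
  "sample_cov X V n \<omega> = sample_mean (\<lambda>i \<omega>. X i \<omega> * V i \<omega>) n \<omega> - sample_mean X n \<omega> * sample_mean V n \<omega>"

lemma identically_distributed_transfer:
  fixes g :: "'b \<Rightarrow> real"
  assumes "X \<in> measurable M N" "X' \<in> measurable M N" "distr M N X = distr M N X'"
    and "g \<in> borel_measurable N"
  shows identically_distributed_integral: "(\<integral>\<omega>. g (X \<omega>) \<partial>M) = (\<integral>\<omega>. g (X' \<omega>) \<partial>M)"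
    and identically_distributed_integrable:
      "integrable M (\<lambda>\<omega>. g (X \<omega>)) \<longleftrightarrow> integrable M (\<lambda>\<omega>. g (X' \<omega>))"
  unfolding integral_distr[OF assms(1,4), symmetric] integral_distr[OF assms(2,4), symmetric]
    integrable_distr_eq[OF assms(1,4), symmetric] integrable_distr_eq[OF assms(2,4), symmetric] assms(3)
  by simp_all

lemma (in prob_space) expectation_mult_indep_centred:
  fixes W :: "'i \<Rightarrow> 'a \<Rightarrow> real"
  assumes "indep_vars (\<lambda>_. borel) W I" "i \<in> I" "j \<in> I" "i \<noteq> j"
    and "integrable M (W i)" "integrable M (W j)" "expectation (W i) = 0"
  shows "expectation (\<lambda>\<omega>. W i \<omega> * W j \<omega>) = 0"
proof -
  have "indep_vars (\<lambda>_. borel) W {i, j}"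
    using indep_vars_subset[OF assms(1)] assms(2,3) by auto
  then have "expectation (\<lambda>\<omega>. \<Prod>k\<in>{i, j}. W k \<omega>) = (\<Prod>k\<in>{i, j}. expectation (W k))"
    by (intro indep_vars_lebesgue_integral) (use assms(5,6) in auto)
  with assms(4,7) show ?thesis
    by simp
qed

lemma (in prob_space) integral_square_sum_indep_le:
  fixes W :: "nat \<Rightarrow> 'a \<Rightarrow> real"
  assumes indep: "indep_vars (\<lambda>_. borel) W {..<n}"
    and bounded: "\<And>i \<omega>. i < n \<Longrightarrow> \<omega> \<in> space M \<Longrightarrow> \<bar>W i \<omega>\<bar> \<le> B"
    and centred: "\<And>i. i < n \<Longrightarrow> expectation (W i) = 0"
  shows "integrable M (\<lambda>\<omega>. (\<Sum>i<n. W i \<omega>)\<^sup>2)"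
    and "(\<integral>\<omega>. (\<Sum>i<n. W i \<omega>)\<^sup>2 \<partial>M) \<le> real n * B\<^sup>2"
proof -
  have [measurable]: "W i \<in> borel_measurable M" if "i < n" for i
    using indep that by (auto simp: indep_vars_def)
  have int_W: "integrable M (W i)" if "i < n" for i
    by (rule integrable_const_bound[where B=B]) (use bounded that in auto)
  have prod_bounded: "\<bar>W i \<omega> * W j \<omega>\<bar> \<le> B * B" if "i < n" "j < n" "\<omega> \<in> space M" for i j \<omega>
    using bounded[OF that(1,3)] bounded[OF that(2,3)] by (simp add: abs_mult mult_mono')
  have int_prod: "integrable M (\<lambda>\<omega>. W i \<omega> * W j \<omega>)" if "i < n" "j < n" for i j
    by (rule integrable_const_bound[where B="B * B"]) (use prod_bounded that in auto)
  have cross: "expectation (\<lambda>\<omega>. W i \<omega> * W j \<omega>) = 0" if "i < n" "j < n" "i \<noteq> j" for i j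
    using that by (intro expectation_mult_indep_centred[OF indep] int_W centred) auto
  have square: "(\<Sum>i<n. W i \<omega>)\<^sup>2 = (\<Sum>i<n. \<Sum>j<n. W i \<omega> * W j \<omega>)" for \<omega>
    by (simp add: power2_eq_square sum_product)
  show "integrable M (\<lambda>\<omega>. (\<Sum>i<n. W i \<omega>)\<^sup>2)"
    unfolding square by (auto intro!: int_prod)
  have "(\<integral>\<omega>. (\<Sum>i<n. W i \<omega>)\<^sup>2 \<partial>M) = (\<Sum>i<n. \<Sum>j<n. expectation (\<lambda>\<omega>. W i \<omega> * W j \<omega>))"
    unfolding square
    by (subst Bochner_Integration.integral_sum, auto intro!: Bochner_Integration.integrable_sum int_prod)
      (auto intro!: sum.cong Bochner_Integration.integral_sum int_prod)
  also have "\<dots> = (\<Sum>i<n. expectation (\<lambda>\<omega>. W i \<omega> * W i \<omega>))"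
  proof (intro sum.cong refl)
    fix i assume "i \<in> {..<n}"
    with cross show "(\<Sum>j<n. expectation (\<lambda>\<omega>. W i \<omega> * W j \<omega>)) = expectation (\<lambda>\<omega>. W i \<omega> * W i \<omega>)"
      by (subst sum.remove[of _ i]) (auto intro!: sum.neutral)
  qed
  also have "\<dots> \<le> (\<Sum>i<n. B\<^sup>2)"
  proof (intro sum_mono)
    fix i assume "i \<in> {..<n}"
    then have "expectation (\<lambda>\<omega>. W i \<omega> * W i \<omega>) \<le> expectation (\<lambda>\<omega>. B\<^sup>2)"
      using prod_bounded[of i i]
      by (intro integral_mono int_prod) (auto simp: power2_eq_square dest: abs_le_D1)
    then show "expectation (\<lambda>\<omega>. W i \<omega> * W i \<omega>) \<le> B\<^sup>2"
      by (simp add: prob_space)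
  qed
  finally show "(\<integral>\<omega>. (\<Sum>i<n. W i \<omega>)\<^sup>2 \<partial>M) \<le> real n * B\<^sup>2"
    by simp
qed

lemma (in prob_space) prob_abs_sample_mean_ge_le:
  fixes W :: "nat \<Rightarrow> 'a \<Rightarrow> real"
  assumes indep: "indep_vars (\<lambda>_. borel) W {..<n}"
    and bounded: "\<And>i \<omega>. i < n \<Longrightarrow> \<omega> \<in> space M \<Longrightarrow> \<bar>W i \<omega>\<bar> \<le> B"
    and centred: "\<And>i. i < n \<Longrightarrow> expectation (W i) = 0"
    and "0 < t" "0 < n"
  shows "prob {\<omega> \<in> space M. t \<le> \<bar>sample_mean W n \<omega>\<bar>} \<le> B\<^sup>2 / (n * t\<^sup>2)"
proof -
  note sum_square = integral_square_sum_indep_le[OF indep bounded centred]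
  have abs_ge_iff: "t \<le> \<bar>x\<bar> \<longleftrightarrow> t\<^sup>2 \<le> x\<^sup>2" for x :: real
    using abs_le_square_iff[of t x] \<open>0 < t\<close> by simp
  have "{\<omega> \<in> space M. t \<le> \<bar>sample_mean W n \<omega>\<bar>} = {\<omega> \<in> space M. t\<^sup>2 \<le> ((\<Sum>i<n. W i \<omega>) / n)\<^sup>2}"
    unfolding sample_mean_def by (simp only: abs_ge_iff)
  also have "prob \<dots> \<le> (\<integral>\<omega>. ((\<Sum>i<n. W i \<omega>) / n)\<^sup>2 \<partial>M) / t\<^sup>2"
    using sum_square(1) \<open>0 < t\<close>
    by (intro integral_Markov_inequality_measure[where A="space M"]) (auto simp: power_divide)
  also have "\<dots> = (\<integral>\<omega>. (\<Sum>i<n. W i \<omega>)\<^sup>2 \<partial>M) / (n\<^sup>2 * t\<^sup>2)"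
    by (simp add: power_divide)
  also have "\<dots> \<le> n * B\<^sup>2 / (n\<^sup>2 * t\<^sup>2)"
    using sum_square(2) \<open>0 < t\<close> by (simp add: divide_right_mono)
  also have "\<dots> = B\<^sup>2 / (n * t\<^sup>2)"
    using \<open>0 < n\<close> by (simp add: power2_eq_square)
  finally show ?thesis .
qed

lemma (in prob_space) prob_sample_mean_ge_le:
  fixes V :: "nat \<Rightarrow> 'a \<Rightarrow> real"
  assumes integrable: "\<And>i. i < n \<Longrightarrow> integrable M (V i)"
    and nonneg: "\<And>i \<omega>. i < n \<Longrightarrow> \<omega> \<in> space M \<Longrightarrow> 0 \<le> V i \<omega>"
    and mean: "\<And>i. i < n \<Longrightarrow> expectation (V i) = \<tau>"
    and "0 < t" "0 < n"
  shows "prob {\<omega> \<in> space M. t \<le> sample_mean V n \<omega>} \<le> \<tau> / t"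
proof -
  have "prob {\<omega> \<in> space M. t \<le> sample_mean V n \<omega>} \<le> (\<integral>\<omega>. (\<Sum>i<n. V i \<omega>) / n \<partial>M) / t"
    unfolding sample_mean_def using integrable nonneg \<open>0 < t\<close>
    by (intro integral_Markov_inequality_measure[where A="space M"])
      (auto intro!: Bochner_Integration.integrable_sum integrable_divide_zero AE_I2 sum_nonneg
        divide_nonneg_nonneg)
  also have "(\<integral>\<omega>. (\<Sum>i<n. V i \<omega>) / n \<partial>M) = \<tau>"
    using integrable mean \<open>0 < n\<close> by (simp add: Bochner_Integration.integral_sum)
  finally show ?thesis .
qed

definition truncate_at :: "real \<Rightarrow> real \<Rightarrow> real" where
  "truncate_at K x = (if \<bar>x\<bar> \<le> K then x else 0)"

lemma truncate_at_measurable [measurable]: "truncate_at K \<in> borel_measurable borel"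
  unfolding truncate_at_def by measurable

lemma abs_truncate_at_le: "\<bar>truncate_at K x\<bar> \<le> max 0 K"
  by (simp add: truncate_at_def)

lemma abs_truncation_error_le: "\<bar>x - truncate_at K x\<bar> \<le> \<bar>x\<bar>"
  by (simp add: truncate_at_def)

lemma integral_truncation_error_tendsto_0:
  fixes f :: "'a \<Rightarrow> real"
  assumes "integrable M f"
  shows "(\<lambda>K. \<integral>\<omega>. \<bar>f \<omega> - truncate_at (real K) (f \<omega>)\<bar> \<partial>M) \<longlonglongrightarrow> 0"
proof -
  have [measurable]: "f \<in> borel_measurable M"
    using assms by simp
  have "AE \<omega> in M. (\<lambda>K. \<bar>f \<omega> - truncate_at (real K) (f \<omega>)\<bar>) \<longlonglongrightarrow> 0"
  proof (rule AE_I2)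
    fix \<omega>
    obtain N where "\<bar>f \<omega>\<bar> \<le> real N"
      using real_arch_simple by blast
    then have "\<forall>\<^sub>F K in sequentially. \<bar>f \<omega> - truncate_at (real K) (f \<omega>)\<bar> = 0"
      by (auto simp: eventually_sequentially truncate_at_def intro!: exI[of _ N])
    then show "(\<lambda>K. \<bar>f \<omega> - truncate_at (real K) (f \<omega>)\<bar>) \<longlonglongrightarrow> 0"
      by (rule tendsto_eventually)
  qed
  from integral_dominated_convergence[OF _ _ _ this, of "\<lambda>\<omega>. \<bar>f \<omega>\<bar>"] show ?thesis
    using assms by (simp add: abs_truncation_error_le)
qed

context prob_space
begin

context
  fixes X :: "nat \<Rightarrow> 'a \<Rightarrow> real"
  assumes indep: "indep_vars (\<lambda>_. borel) X UNIV"
    and ident: "\<And>i. distr M borel (X i) = distr M borel (X 0)"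
begin

lemma iid_measurable [measurable]: "X i \<in> borel_measurable M"
  using indep by (simp add: indep_vars_def)

lemma iid_same_integral:
  fixes g :: "real \<Rightarrow> real"
  shows "g \<in> borel_measurable borel \<Longrightarrow> (\<integral>\<omega>. g (X i \<omega>) \<partial>M) = (\<integral>\<omega>. g (X 0 \<omega>) \<partial>M)"
  by (rule identically_distributed_integral[OF iid_measurable iid_measurable ident])

lemma iid_same_integrable:
  fixes g :: "real \<Rightarrow> real"
  shows "g \<in> borel_measurable borel \<Longrightarrow> integrable M (\<lambda>\<omega>. g (X i \<omega>)) \<longleftrightarrow> integrable M (\<lambda>\<omega>. g (X 0 \<omega>))"
  by (rule identically_distributed_integrable[OF iid_measurable iid_measurable ident])

lemma prob_truncated_sample_mean_deviation_le:
  assumes "0 \<le> K" "0 < t" "0 < n"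
  shows "prob {\<omega> \<in> space M. t \<le> \<bar>sample_mean (\<lambda>i \<omega>. truncate_at K (X i \<omega>)) n \<omega>
      - expectation (\<lambda>\<omega>. truncate_at K (X 0 \<omega>))\<bar>} \<le> 4 * K\<^sup>2 / (n * t\<^sup>2)"
proof -
  define \<mu> where "\<mu> = expectation (\<lambda>\<omega>. truncate_at K (X 0 \<omega>))"
  define U where "U = (\<lambda>i \<omega>. truncate_at K (X i \<omega>) - \<mu>)"
  have int_trunc: "integrable M (\<lambda>\<omega>. truncate_at K (X i \<omega>))" for i
    by (rule integrable_const_bound[where B="max 0 K"]) (auto simp: abs_truncate_at_le)
  have "\<bar>\<mu>\<bar> \<le> expectation (\<lambda>\<omega>. \<bar>truncate_at K (X 0 \<omega>)\<bar>)"
    unfolding \<mu>_def by (rule integral_abs_bound)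
  also have "\<dots> \<le> expectation (\<lambda>\<omega>. K)"
    using abs_truncate_at_le[of K] \<open>0 \<le> K\<close> int_trunc by (intro integral_mono) auto
  finally have \<mu>_bound: "\<bar>\<mu>\<bar> \<le> K"
    by (simp add: prob_space)
  have "sample_mean (\<lambda>i \<omega>. truncate_at K (X i \<omega>)) n \<omega> - \<mu> = sample_mean U n \<omega>" for \<omega>
    using \<open>0 < n\<close> by (simp add: sample_mean_def U_def sum_subtractf diff_divide_distrib)
  then have "prob {\<omega> \<in> space M. t \<le> \<bar>sample_mean (\<lambda>i \<omega>. truncate_at K (X i \<omega>)) n \<omega> - \<mu>\<bar>}
      = prob {\<omega> \<in> space M. t \<le> \<bar>sample_mean U n \<omega>\<bar>}"
    by simp
  also have "\<dots> \<le> (2 * K)\<^sup>2 / (n * t\<^sup>2)"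
  proof (rule prob_abs_sample_mean_ge_le)
    show "indep_vars (\<lambda>_. borel) U {..<n}"
      unfolding U_def by (rule indep_vars_compose2[OF indep_vars_subset[OF indep]]) auto
    show "\<bar>U i \<omega>\<bar> \<le> 2 * K" for i \<omega>
      using abs_truncate_at_le[of K "X i \<omega>"] \<mu>_bound \<open>0 \<le> K\<close> by (simp add: U_def)
    have "expectation (U i) = expectation (\<lambda>\<omega>. truncate_at K (X i \<omega>)) - \<mu>" for i
      unfolding U_def using int_trunc[of i] by (simp add: prob_space)
    then show "expectation (U i) = 0" for i
      using iid_same_integral[OF truncate_at_measurable[of K], of i] by (simp add: \<mu>_def)
  qed (use assms in auto)
  finally show ?thesis
    by (simp add: \<mu>_def power_mult_distrib)
qed

lemma prob_truncation_error_sample_mean_ge_le: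
  assumes "integrable M (X 0)" "0 < t" "0 < n"
  shows "prob {\<omega> \<in> space M. t \<le> sample_mean (\<lambda>i \<omega>. \<bar>X i \<omega> - truncate_at K (X i \<omega>)\<bar>) n \<omega>}
    \<le> expectation (\<lambda>\<omega>. \<bar>X 0 \<omega> - truncate_at K (X 0 \<omega>)\<bar>) / t"
proof (rule prob_sample_mean_ge_le)
  have error_measurable: "(\<lambda>x. \<bar>x - truncate_at K x\<bar>) \<in> borel_measurable borel"
    by measurable
  have "integrable M (\<lambda>\<omega>. truncate_at K (X 0 \<omega>))"
    by (rule integrable_const_bound[where B="max 0 K"]) (auto simp: abs_truncate_at_le)
  with assms(1) have "integrable M (\<lambda>\<omega>. \<bar>X 0 \<omega> - truncate_at K (X 0 \<omega>)\<bar>)"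
    by (intro integrable_abs Bochner_Integration.integrable_diff)
  then show "integrable M (\<lambda>\<omega>. \<bar>X i \<omega> - truncate_at K (X i \<omega>)\<bar>)" for i
    using iid_same_integrable[OF error_measurable, of i] by simp
  show "expectation (\<lambda>\<omega>. \<bar>X i \<omega> - truncate_at K (X i \<omega>)\<bar>)
      = expectation (\<lambda>\<omega>. \<bar>X 0 \<omega> - truncate_at K (X 0 \<omega>)\<bar>)" for i
    by (rule iid_same_integral) measurable
qed (use assms in auto)

text \<open>The truncated part is bounded, so Chebyshev's inequality controls it; the truncation error
  is only integrable, and Markov's inequality controls it.\<close>

lemma prob_sample_mean_deviation_le:
  assumes integrable: "integrable M (X 0)"
    and "0 \<le> K" "0 < e" "0 < n"
    and tail: "expectation (\<lambda>\<omega>. \<bar>X 0 \<omega> - truncate_at K (X 0 \<omega>)\<bar>) < e / 3"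
  shows "prob {\<omega> \<in> space M. e < \<bar>sample_mean X n \<omega> - expectation (X 0)\<bar>}
    \<le> 36 * K\<^sup>2 / (n * e\<^sup>2) + 3 / e * expectation (\<lambda>\<omega>. \<bar>X 0 \<omega> - truncate_at K (X 0 \<omega>)\<bar>)"
proof -
  define T where "T = (\<lambda>i \<omega>. truncate_at K (X i \<omega>))"
  define V where "V = (\<lambda>i \<omega>. X i \<omega> - truncate_at K (X i \<omega>))"
  let ?A = "{\<omega> \<in> space M. e/3 \<le> \<bar>sample_mean T n \<omega> - expectation (T 0)\<bar>}"
  let ?B = "{\<omega> \<in> space M. e/3 \<le> sample_mean (\<lambda>i \<omega>. \<bar>V i \<omega>\<bar>) n \<omega>}"
  have "integrable M (T 0)"
    unfolding T_def by (rule integrable_const_bound[where B="max 0 K"]) (auto simp: abs_truncate_at_le)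
  then have "expectation (X 0) = expectation (T 0) + expectation (V 0)"
    using integrable by (simp add: T_def V_def)
  then have split: "sample_mean X n \<omega> - expectation (X 0)
      = (sample_mean T n \<omega> - expectation (T 0)) + sample_mean V n \<omega> - expectation (V 0)" for \<omega>
    using \<open>0 < n\<close> by (simp add: sample_mean_def T_def V_def sum_subtractf field_simps)
  have abs_mean_V: "\<bar>sample_mean V n \<omega>\<bar> \<le> sample_mean (\<lambda>i \<omega>. \<bar>V i \<omega>\<bar>) n \<omega>" for \<omega>
    by (simp add: sample_mean_def abs_divide divide_right_mono sum_abs)
  have mean_V_small: "\<bar>expectation (V 0)\<bar> < e/3"
    by (rule order.strict_trans1[OF integral_abs_bound]) (use tail in \<open>simp add: V_def\<close>)
  have "{\<omega> \<in> space M. e < \<bar>sample_mean X n \<omega> - expectation (X 0)\<bar>} \<subseteq> ?A \<union> ?B"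
  proof safe
    fix \<omega> assume "\<omega> \<in> space M" "e < \<bar>sample_mean X n \<omega> - expectation (X 0)\<bar>"
      "\<not> e/3 \<le> sample_mean (\<lambda>i \<omega>. \<bar>V i \<omega>\<bar>) n \<omega>"
    with abs_mean_V[of \<omega>] mean_V_small show "e/3 \<le> \<bar>sample_mean T n \<omega> - expectation (T 0)\<bar>"
      unfolding split by arith
  qed
  then have "prob {\<omega> \<in> space M. e < \<bar>sample_mean X n \<omega> - expectation (X 0)\<bar>} \<le> prob ?A + prob ?B"
    by (intro order.trans[OF finite_measure_mono measure_Un_le])
      (auto simp: T_def V_def sample_mean_def)
  also have "\<dots> \<le> 4 * K\<^sup>2 / (n * (e/3)\<^sup>2) + expectation (\<lambda>\<omega>. \<bar>V 0 \<omega>\<bar>) / (e/3)"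
    using prob_truncated_sample_mean_deviation_le[of K "e/3" n]
      prob_truncation_error_sample_mean_ge_le[OF integrable, of "e/3" n K] assms
    unfolding T_def V_def by (intro add_mono) auto
  also have "\<dots> = 36 * K\<^sup>2 / (n * e\<^sup>2) + 3 / e * expectation (\<lambda>\<omega>. \<bar>X 0 \<omega> - truncate_at K (X 0 \<omega>)\<bar>)"
    by (simp add: V_def power2_eq_square)
  finally show ?thesis .
qed

theorem weak_law_of_large_numbers:
  assumes integrable: "integrable M (X 0)"
  shows "conv_in_prob M (sample_mean X) (expectation (X 0))"
proof -
  define tail where "tail K = expectation (\<lambda>\<omega>. \<bar>X 0 \<omega> - truncate_at K (X 0 \<omega>)\<bar>)" for K
  have "(\<lambda>n. prob {\<omega> \<in> space M. e < \<bar>sample_mean X n \<omega> - expectation (X 0)\<bar>}) \<longlonglongrightarrow> 0"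
    if "0 < e" for e
  proof (rule LIMSEQ_I)
    fix r :: real assume "0 < r"
    with \<open>0 < e\<close> obtain K :: nat where K: "tail K < e / 3" "tail K < r * e / 6"
      using order_tendstoD(2)[OF integral_truncation_error_tendsto_0[OF integrable],
          of "min (e/3) (r*e/6)"]
      by (auto simp: eventually_sequentially tail_def)
    obtain N :: nat where N: "72 * (real K)\<^sup>2 / (r * e\<^sup>2) < N"
      using reals_Archimedean2 by blast
    have "prob {\<omega> \<in> space M. e < \<bar>sample_mean X n \<omega> - expectation (X 0)\<bar>} < r"
      if "max 1 N \<le> n" for n
    proof -
      have "prob {\<omega> \<in> space M. e < \<bar>sample_mean X n \<omega> - expectation (X 0)\<bar>}
          \<le> 36 * (real K)\<^sup>2 / (n * e\<^sup>2) + 3 / e * tail K"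
        unfolding tail_def using K that \<open>0 < e\<close>
        by (intro prob_sample_mean_deviation_le[OF integrable]) (auto simp: tail_def)
      also have "\<dots> < r / 2 + r / 2"
      proof (rule add_strict_mono)
        have "72 * (real K)\<^sup>2 < r * e\<^sup>2 * N"
          using N \<open>0 < r\<close> \<open>0 < e\<close> by (simp add: field_simps)
        also have "\<dots> \<le> r * e\<^sup>2 * n"
          using that \<open>0 < r\<close> by (intro mult_left_mono) auto
        finally show "36 * (real K)\<^sup>2 / (n * e\<^sup>2) < r / 2"
          using that \<open>0 < e\<close> by (simp add: field_simps)
        show "3 / e * tail K < r / 2"
          using K(2) \<open>0 < e\<close> by (simp add: field_simps)
      qed
      finally show ?thesis
        by simp
    qed
    then show "\<exists>N. \<forall>n\<ge>N.
        norm (prob {\<omega> \<in> space M. e < \<bar>sample_mean X n \<omega> - expectation (X 0)\<bar>} - 0) < r"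
      by (auto intro!: exI[of _ "max 1 N"])
  qed
  moreover have "sample_mean X n \<in> borel_measurable M" for n
    unfolding sample_mean_def[abs_def] by measurable
  ultimately show ?thesis
    by (simp add: conv_in_prob_def)
qed

end

lemma conv_in_prob_sample_mean_iid:
  assumes indep: "indep_vars (\<lambda>_. N) U UNIV"
    and ident: "\<And>i. distr M N (U i) = distr M N (U 0)"
    and h: "h \<in> borel_measurable N" and "integrable M (\<lambda>\<omega>. h (U 0 \<omega>))"
  shows "conv_in_prob M (sample_mean (\<lambda>i \<omega>. h (U i \<omega>))) (\<integral>\<omega>. h (U 0 \<omega>) \<partial>M)"
proof -
  have U_measurable: "U i \<in> measurable M N" for i
    using indep by (simp add: indep_vars_def)
  have "indep_vars (\<lambda>_. borel) (\<lambda>i \<omega>. h (U i \<omega>)) UNIV"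
    using indep h by (rule indep_vars_compose2)
  moreover have "distr M borel (\<lambda>\<omega>. h (U i \<omega>)) = distr M borel (\<lambda>\<omega>. h (U 0 \<omega>))" for i
    using distr_distr[OF h U_measurable, of i] distr_distr[OF h U_measurable, of 0] ident[of i]
    by (simp add: comp_def)
  ultimately show ?thesis
    using assms(4) by (rule weak_law_of_large_numbers[where X="\<lambda>i \<omega>. h (U i \<omega>)"])
qed

end

definition cov :: "'a measure \<Rightarrow> ('a \<Rightarrow> real) \<Rightarrow> ('a \<Rightarrow> real) \<Rightarrow> real" where
  "cov M X V = (\<integral>\<omega>. X \<omega> * V \<omega> \<partial>M) - (\<integral>\<omega>. X \<omega> \<partial>M) * (\<integral>\<omega>. V \<omega> \<partial>M)"

lemma (in prob_space) conv_in_prob_sample_cov_iid: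
  assumes indep: "indep_vars (\<lambda>_. N) U UNIV"
    and ident: "\<And>i. distr M N (U i) = distr M N (U 0)"
    and [measurable]: "f \<in> borel_measurable N" "g \<in> borel_measurable N"
    and f: "integrable M (\<lambda>\<omega>. f (U 0 \<omega>))" and g: "\<And>u. \<bar>g u\<bar> \<le> B"
  shows "conv_in_prob M (sample_cov (\<lambda>i \<omega>. f (U i \<omega>)) (\<lambda>i \<omega>. g (U i \<omega>)))
    (cov M (\<lambda>\<omega>. f (U 0 \<omega>)) (\<lambda>\<omega>. g (U 0 \<omega>)))"
proof -
  have [measurable]: "U 0 \<in> measurable M N"
    using indep by (simp add: indep_vars_def)
  have "integrable M (\<lambda>\<omega>. g (U 0 \<omega>))"
    using g by (intro integrable_const_bound[where B=B]) auto
  moreover have "integrable M (\<lambda>\<omega>. f (U 0 \<omega>) * g (U 0 \<omega>))"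
  proof (rule Bochner_Integration.integrable_bound[OF integrable_mult_right[where c="\<bar>B\<bar>", OF f]])
    have "\<bar>f u * g u\<bar> \<le> \<bar>B\<bar> * \<bar>f u\<bar>" for u
    proof -
      have "\<bar>g u\<bar> \<le> \<bar>B\<bar>"
        using g[of u] by linarith
      from mult_right_mono[OF this abs_ge_zero[of "f u"]] show ?thesis
        by (simp add: abs_mult mult.commute)
    qed
    then show "AE \<omega> in M. norm (f (U 0 \<omega>) * g (U 0 \<omega>)) \<le> norm (\<bar>B\<bar> * f (U 0 \<omega>))"
      by (simp add: abs_mult)
  qed measurable
  ultimately show ?thesis
    unfolding sample_cov_def[abs_def] cov_def using f
    by (intro conv_in_prob_diff conv_in_prob_mult prob_space_axioms
        conv_in_prob_sample_mean_iid[OF indep ident]) auto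
qed

section \<open>The GMM estimator\<close>

definition qform :: "nat \<Rightarrow> (nat \<Rightarrow> nat \<Rightarrow> real) \<Rightarrow> (nat \<Rightarrow> real) \<Rightarrow> (nat \<Rightarrow> real) \<Rightarrow> real" where
  "qform L W x y = (\<Sum>l<L. \<Sum>m<L. x l * W l m * y m)"

lemma gn_eq_sample_cov:
  "gn Y D Zv n \<omega> \<beta> l
    = sample_cov Y (\<lambda>i \<omega>. Zv i \<omega> l) n \<omega> - \<beta> * sample_cov D (\<lambda>i \<omega>. Zv i \<omega> l) n \<omega>"
proof -
  define p where "p = phat Zv n \<omega> l"
  have "(\<Sum>i<n. (Y i \<omega> - \<beta> * D i \<omega>) * (Zv i \<omega> l - p))
      = (\<Sum>i<n. Y i \<omega> * Zv i \<omega> l) - p * (\<Sum>i<n. Y i \<omega>)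
        - \<beta> * ((\<Sum>i<n. D i \<omega> * Zv i \<omega> l) - p * (\<Sum>i<n. D i \<omega>))"
    by (simp add: algebra_simps sum.distrib sum_subtractf sum_distrib_left)
  moreover have "sample_mean (\<lambda>i \<omega>. Zv i \<omega> l) n \<omega> = p"
    by (simp add: p_def phat_def sample_mean_def)
  ultimately show ?thesis
    unfolding gn_def sample_cov_def p_def[symmetric]
    by (simp add: sample_mean_def diff_divide_distrib right_diff_distrib ac_simps)
qed

lemma qform_commute:
  assumes "\<And>l m. l < L \<Longrightarrow> m < L \<Longrightarrow> W l m = W m l"
  shows "qform L W y x = qform L W x y"
  unfolding qform_def using assms by (subst sum.swap) (auto intro!: sum.cong simp: ac_simps)

lemma qform_diff_scaled:
  assumes "\<And>l m. l < L \<Longrightarrow> m < L \<Longrightarrow> W l m = W m l"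
  shows "qform L W (\<lambda>l. a l - \<beta> * b l) (\<lambda>l. a l - \<beta> * b l)
    = qform L W a a - 2 * \<beta> * qform L W a b + \<beta>\<^sup>2 * qform L W b b"
proof -
  have "qform L W (\<lambda>l. a l - \<beta> * b l) (\<lambda>l. a l - \<beta> * b l)
      = qform L W a a - \<beta> * qform L W a b - \<beta> * qform L W b a + \<beta>\<^sup>2 * qform L W b b"
    unfolding qform_def
    by (simp add: algebra_simps power2_eq_square sum.distrib sum_subtractf sum_distrib_left)
  with qform_commute[OF assms, where x=a and y=b] show ?thesis
    by simp
qed

lemma qform_unit_vector:
  assumes "l < L"
  shows "qform L W (\<lambda>k. of_bool (k = l)) (\<lambda>k. of_bool (k = l)) = W l l"
proof -
  have "(\<Sum>m<L. of_bool (k = l) * W k m * of_bool (m = l)) = of_bool (k = l) * W k l" for k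
    using assms by (subst sum.mono_neutral_cong_right[where S="{l}"]) auto
  moreover have "(\<Sum>k<L. of_bool (k = l) * W k l) = W l l"
    using assms by (subst sum.mono_neutral_cong_right[where S="{l}"]) auto
  ultimately show ?thesis
    by (simp add: qform_def)
qed

lemma posdef_qform_nonneg: "posdef L W \<Longrightarrow> 0 \<le> qform L W x x"
  unfolding posdef_def qform_def by (cases "\<exists>l<L. x l \<noteq> 0") (auto intro: less_imp_le)

lemma posdef_qform_pos: "posdef L W \<Longrightarrow> l < L \<Longrightarrow> x l \<noteq> 0 \<Longrightarrow> 0 < qform L W x x"
  unfolding posdef_def qform_def by blast

lemma arg_min_quadratic:
  fixes Q A B :: real
  assumes "0 < B"
  shows "(SOME \<beta>. is_arg_min (\<lambda>\<beta>. Q - 2 * \<beta> * A + \<beta>\<^sup>2 * B) (\<lambda>_. True) \<beta>) = A / B"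
proof (rule some_equality)
  have square: "Q - 2 * \<beta> * A + \<beta>\<^sup>2 * B = (Q - A\<^sup>2 / B) + B * (\<beta> - A / B)\<^sup>2" for \<beta>
    using assms by (simp add: field_simps power2_eq_square)
  show "is_arg_min (\<lambda>\<beta>. Q - 2 * \<beta> * A + \<beta>\<^sup>2 * B) (\<lambda>_. True) (A / B)"
    unfolding is_arg_min_def square using assms by (auto simp: not_less)
  show "\<beta> = A / B" if "is_arg_min (\<lambda>\<beta>. Q - 2 * \<beta> * A + \<beta>\<^sup>2 * B) (\<lambda>_. True) \<beta>" for \<beta>
  proof -
    from that have "B * (\<beta> - A / B)\<^sup>2 \<le> 0"
      unfolding is_arg_min_def square by (auto simp: not_less dest: spec[of _ "A / B"])
    with assms zero_le_power2[of "\<beta> - A / B"] have "(\<beta> - A / B)\<^sup>2 = 0"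
      by (simp add: mult_le_0_iff)
    then show ?thesis
      by simp
  qed
qed

lemma gmm_est_eq_ratio:
  fixes Y D :: "nat \<Rightarrow> 'a \<Rightarrow> real" and Zv :: "nat \<Rightarrow> 'a \<Rightarrow> nat \<Rightarrow> real"
    and n :: nat and \<omega> :: 'a
  assumes "posdef L W"
  defines "a \<equiv> \<lambda>l. sample_cov Y (\<lambda>i \<omega>. Zv i \<omega> l) n \<omega>"
    and "b \<equiv> \<lambda>l. sample_cov D (\<lambda>i \<omega>. Zv i \<omega> l) n \<omega>"
  shows "gmm_est L W Y D Zv n \<omega>
    = (if 0 < qform L W b b then qform L W a b / qform L W b b else (SOME \<beta>. True))"
proof -
  have "\<And>l m. l < L \<Longrightarrow> m < L \<Longrightarrow> W l m = W m l"
    using assms(1) by (simp add: posdef_def)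
  moreover have "gmm_obj L W Y D Zv n \<omega> = (\<lambda>\<beta>. qform L W (\<lambda>l. a l - \<beta> * b l) (\<lambda>l. a l - \<beta> * b l))"
    by (simp add: fun_eq_iff gmm_obj_def qform_def gn_eq_sample_cov a_def b_def)
  ultimately have objective: "gmm_obj L W Y D Zv n \<omega>
      = (\<lambda>\<beta>. qform L W a a - 2 * \<beta> * qform L W a b + \<beta>\<^sup>2 * qform L W b b)"
    by (simp add: qform_diff_scaled)
  show ?thesis
  proof (cases "0 < qform L W b b")
    case True
    then show ?thesis
      by (simp add: gmm_est_def objective arg_min_quadratic)
  next
    case False
    with posdef_qform_nonneg[OF assms(1)] have "qform L W b b = 0"
      by (simp add: order_less_le)
    with posdef_qform_pos[OF assms(1), of _ b] have "\<forall>l<L. b l = 0"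
      by (metis less_irrefl)
    then have "qform L W a b = 0"
      by (simp add: qform_def)
    with \<open>qform L W b b = 0\<close> show ?thesis
      by (simp add: gmm_est_def objective is_arg_min_def)
  qed
qed

lemma conv_in_prob_qform:
  assumes "prob_space M"
    and "\<And>l. l < L \<Longrightarrow> conv_in_prob M (\<lambda>n \<omega>. x n \<omega> l) (x\<^sub>0 l)"
    and "\<And>l. l < L \<Longrightarrow> conv_in_prob M (\<lambda>n \<omega>. y n \<omega> l) (y\<^sub>0 l)"
  shows "conv_in_prob M (\<lambda>n \<omega>. qform L W (x n \<omega>) (y n \<omega>)) (qform L W x\<^sub>0 y\<^sub>0)"
proof -
  have summand: "conv_in_prob M (\<lambda>n \<omega>. x n \<omega> l * W l m * y n \<omega> m) (x\<^sub>0 l * W l m * y\<^sub>0 m)"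
    if "l < L" "m < L" for l m
    using conv_in_prob_mult[OF assms(1) conv_in_prob_mult[OF assms(1) assms(2)[OF that(1)]
        conv_in_prob_const[of M "W l m"]] assms(3)[OF that(2)]] .
  show ?thesis
    unfolding qform_def
    by (rule conv_in_prob_sum[OF assms(1) finite_lessThan], rule conv_in_prob_sum[OF assms(1) finite_lessThan])
      (simp add: summand)
qed

lemma conv_in_prob_gmm_est:
  assumes "prob_space M" "posdef L W"
    and "\<And>l. l < L \<Longrightarrow> conv_in_prob M (sample_cov Y (\<lambda>i \<omega>. Zv i \<omega> l)) (c l)"
    and "\<And>l. l < L \<Longrightarrow> conv_in_prob M (sample_cov D (\<lambda>i \<omega>. Zv i \<omega> l)) (g l)"
    and "0 < qform L W g g"
  shows "conv_in_prob M (gmm_est L W Y D Zv) (qform L W c g / qform L W g g)"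
proof -
  have "conv_in_prob M (\<lambda>n \<omega>. qform L W (\<lambda>l. sample_cov Y (\<lambda>i \<omega>. Zv i \<omega> l) n \<omega>)
      (\<lambda>l. sample_cov D (\<lambda>i \<omega>. Zv i \<omega> l) n \<omega>)) (qform L W c g)"
    and "conv_in_prob M (\<lambda>n \<omega>. qform L W (\<lambda>l. sample_cov D (\<lambda>i \<omega>. Zv i \<omega> l) n \<omega>)
      (\<lambda>l. sample_cov D (\<lambda>i \<omega>. Zv i \<omega> l) n \<omega>)) (qform L W g g)"
    using conv_in_prob_qform[OF assms(1,3,4)] conv_in_prob_qform[OF assms(1,4,4)] by simp_all
  from conv_in_prob_divide_guarded[OF assms(1) this assms(5)] show ?thesis
    unfolding gmm_est_eq_ratio[OF assms(2), abs_def] .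
qed

section \<open>Binary instruments\<close>

context prob_space
begin

context
  fixes Zv :: "'a \<Rightarrow> nat \<Rightarrow> real" and l :: nat
  assumes Zv_measurable: "(\<lambda>\<omega>. Zv \<omega> l) \<in> borel_measurable M"
    and Zv_binary: "\<And>\<omega>. Zv \<omega> l = 0 \<or> Zv \<omega> l = 1"
begin

lemma binary_eq_indicator: "\<omega> \<in> space M \<Longrightarrow> Zv \<omega> l = indicator {\<omega> \<in> space M. Zv \<omega> l = 1} \<omega>"
  using Zv_binary[of \<omega>] by (auto simp: indicator_def)

lemma binary_event [measurable]: "{\<omega> \<in> space M. Zv \<omega> l = 1} \<in> events"
  using Zv_measurable by measurable

lemma integral_binary_eq_pZ: "expectation (\<lambda>\<omega>. Zv \<omega> l) = pZ M Zv l"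
proof -
  have "expectation (\<lambda>\<omega>. Zv \<omega> l) = expectation (indicator {\<omega> \<in> space M. Zv \<omega> l = 1})"
    by (rule Bochner_Integration.integral_cong[OF refl binary_eq_indicator])
  then show ?thesis
    by (simp add: pZ_def)
qed

lemma cov_binary_self: "cov M (\<lambda>\<omega>. Zv \<omega> l) (\<lambda>\<omega>. Zv \<omega> l) = pZ M Zv l * (1 - pZ M Zv l)"
proof -
  have "(\<lambda>\<omega>. Zv \<omega> l * Zv \<omega> l) = (\<lambda>\<omega>. Zv \<omega> l)"
    using Zv_binary by (auto simp: fun_eq_iff)
  then show ?thesis
    by (simp add: cov_def integral_binary_eq_pZ algebra_simps power2_eq_square)
qed

lemma cov_binary_eq_diffZ:
  assumes X: "integrable M X" and "0 < pZ M Zv l" "pZ M Zv l < 1"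
  shows "cov M X (\<lambda>\<omega>. Zv \<omega> l) = diffZ M X Zv l * pZ M Zv l * (1 - pZ M Zv l)"
proof -
  define A where "A = {\<omega> \<in> space M. Zv \<omega> l = 1}"
  define p where "p = pZ M Zv l"
  define I where "I = (\<integral>\<omega>. indicator A \<omega> * X \<omega> \<partial>M)"
  have A_event [measurable]: "A \<in> events"
    unfolding A_def by (rule binary_event)
  have "{\<omega> \<in> space M. Zv \<omega> l = 0} = space M - A"
    using Zv_binary by (auto simp: A_def)
  moreover have "prob (space M - A) = 1 - p"
    by (simp add: prob_compl p_def pZ_def A_def)
  moreover have "(\<integral>\<omega>. indicator (space M - A) \<omega> * X \<omega> \<partial>M) = expectation X - I"
  proof -
    have "(\<integral>\<omega>. indicator (space M - A) \<omega> * X \<omega> \<partial>M) = (\<integral>\<omega>. X \<omega> - indicator A \<omega> * X \<omega> \<partial>M)"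
      by (rule Bochner_Integration.integral_cong) (auto simp: indicator_def)
    then show ?thesis
      using X integrable_mult_indicator[OF A_event X] by (simp add: I_def)
  qed
  ultimately have diffZ_eq: "diffZ M X Zv l = I / p - (expectation X - I) / (1 - p)"
    by (simp add: diffZ_def cond_mean_def I_def p_def pZ_def A_def)
  have "(\<integral>\<omega>. X \<omega> * Zv \<omega> l \<partial>M) = I"
    unfolding I_def A_def
    by (rule Bochner_Integration.integral_cong[OF refl]) (subst binary_eq_indicator; simp add: mult.commute)
  then have "cov M X (\<lambda>\<omega>. Zv \<omega> l) = I - expectation X * p"
    by (simp add: cov_def integral_binary_eq_pZ p_def)
  also have "\<dots> = (I / p - (expectation X - I) / (1 - p)) * p * (1 - p)"
    using assms(2,3) unfolding p_def[symmetric] by (simp add: field_simps)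
  finally show ?thesis
    by (simp add: diffZ_eq p_def)
qed

end

lemma pZ_less_1:
  assumes "posdef L (covZ M Zv)" "l < L"
    and "(\<lambda>\<omega>. Zv \<omega> l) \<in> borel_measurable M" "\<And>\<omega>. Zv \<omega> l = 0 \<or> Zv \<omega> l = 1"
  shows "pZ M Zv l < 1"
proof -
  have "0 < qform L (covZ M Zv) (\<lambda>k. of_bool (k = l)) (\<lambda>k. of_bool (k = l))"
    using posdef_qform_pos[OF assms(1,2)] by simp
  also have "\<dots> = covZ M Zv l l"
    using assms(2) by (rule qform_unit_vector)
  also have "\<dots> = pZ M Zv l * (1 - pZ M Zv l)"
    using cov_binary_self[of Zv l, OF assms(3,4)] by (simp add: covZ_def cov_def)
  finally have "0 < pZ M Zv l * (1 - pZ M Zv l)" .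
  moreover have "0 \<le> pZ M Zv l"
    by (simp add: pZ_def)
  ultimately show ?thesis
    by (simp add: zero_less_mult_iff)
qed

end

lemma beta_star_eq_qform:
  assumes "\<And>l. l < L \<Longrightarrow> c l = wd l * g l"
  shows "beta_star L W g wd = qform L W c g / qform L W g g"
  unfolding beta_star_def lam_def qform_def using assms
  by (simp add: sum_divide_distrib sum_distrib_left ac_simps)

lemma sum_lam_eq_1:
  assumes "qform L W g g \<noteq> 0"
  shows "(\<Sum>l<L. lam L W g l) = 1"
  using assms unfolding lam_def qform_def
  by (simp add: sum_divide_distrib[symmetric] sum_distrib_left ac_simps)

lemma finite_zspace: "finite (zspace L)"
proof -
  have "zspace L \<subseteq> (\<lambda>A l. l \<in> A) ` Pow {..<L}"
  proof
    fix z assume "z \<in> zspace L"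
    then have "z = (\<lambda>l. l \<in> {l. z l})" and "{l. z l} \<in> Pow {..<L}"
      by (auto simp: zspace_def not_le[symmetric])
    then show "z \<in> (\<lambda>A l. l \<in> A) ` Pow {..<L}"
      by blast
  qed
  then show ?thesis
    by (rule finite_subset) simp
qed

lemma unit_space_measurable_rectangle:
  fixes g h :: "_ \<Rightarrow> real"
  shows "(\<lambda>u. g (fst (snd u)) * h (snd (snd u))) \<in> borel_measurable unit_space"
proof -
  have "(\<lambda>u. fst (snd u)) \<in> measurable unit_space (count_space UNIV)"
    and "(\<lambda>u. snd (snd u)) \<in> measurable unit_space (count_space UNIV)"
    unfolding unit_space_def by measurable
  from measurable_compose[OF this(1), of g borel] measurable_compose[OF this(2), of h borel]
  show ?thesis
    by (intro borel_measurable_times) simp_all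
qed

text \<open>Evaluating the compliance type at the realised instrument vector is not measurable for the
  product of the two count spaces, whose index types are uncountable.  Summing over the finitely many
  vectors of \<^const>\<open>zspace\<close> writes it as a finite sum of measurable rectangles; it agrees with
  \<^const>\<open>Dobs\<close> because the instruments take values in \<^const>\<open>zspace\<close>.\<close>

definition unit_treated :: "nat \<Rightarrow> (real \<times> real) \<times> ((nat \<Rightarrow> bool) \<Rightarrow> bool) \<times> (nat \<Rightarrow> bool) \<Rightarrow> real" where
  "unit_treated L u = (\<Sum>z\<in>zspace L. of_bool (fst (snd u) z) * of_bool (snd (snd u) = z))"

definition unit_outcome :: "nat \<Rightarrow> (real \<times> real) \<times> ((nat \<Rightarrow> bool) \<Rightarrow> bool) \<times> (nat \<Rightarrow> bool) \<Rightarrow> real" where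
  "unit_outcome L u = unit_treated L u * snd (fst u) + (1 - unit_treated L u) * fst (fst u)"

definition unit_instrument :: "nat \<Rightarrow> (real \<times> real) \<times> ((nat \<Rightarrow> bool) \<Rightarrow> bool) \<times> (nat \<Rightarrow> bool) \<Rightarrow> real" where
  "unit_instrument l u = of_bool (snd (snd u) l)"

lemma unit_treated_measurable [measurable]: "unit_treated L \<in> borel_measurable unit_space"
  unfolding unit_treated_def[abs_def]
  by (intro borel_measurable_sum unit_space_measurable_rectangle)

lemma unit_outcome_measurable [measurable]: "unit_outcome L \<in> borel_measurable unit_space"
proof -
  have [measurable]: "(\<lambda>u. fst (fst u)) \<in> borel_measurable unit_space"
    "(\<lambda>u. snd (fst u)) \<in> borel_measurable unit_space"
    unfolding unit_space_def by measurable
  show ?thesis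
    unfolding unit_outcome_def[abs_def] by measurable
qed

lemma unit_instrument_measurable [measurable]: "unit_instrument l \<in> borel_measurable unit_space"
  using unit_space_measurable_rectangle[of "\<lambda>_. 1" "\<lambda>z. of_bool (z l)"]
  by (simp add: unit_instrument_def[abs_def])

lemma abs_unit_instrument_le: "\<bar>unit_instrument l u\<bar> \<le> 1"
  by (simp add: unit_instrument_def)

lemma Dobs_eq_unit_treated:
  assumes "Z i \<omega> \<in> zspace L"
  shows "Dobs Dt Z i \<omega> = unit_treated L (unit_var Y0 Y1 Dt Z i \<omega>)"
proof -
  have "unit_treated L (unit_var Y0 Y1 Dt Z i \<omega>)
      = (\<Sum>z\<in>zspace L. if Z i \<omega> = z then of_bool (Dt i \<omega> z) else 0)"
    unfolding unit_treated_def unit_var_def by (intro sum.cong) auto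
  with assms show ?thesis
    by (simp add: Dobs_def finite_zspace)
qed

lemma Yobs_eq_unit_outcome:
  assumes "Z i \<omega> \<in> zspace L"
  shows "Yobs Y0 Y1 Dt Z i \<omega> = unit_outcome L (unit_var Y0 Y1 Dt Z i \<omega>)"
  unfolding Yobs_def unit_outcome_def Dobs_eq_unit_treated[of Z i \<omega> L Dt Y0 Y1, OF assms] by (simp add: unit_var_def)

lemma Zobs_eq_unit_instrument: "Zobs Z i \<omega> l = unit_instrument l (unit_var Y0 Y1 Dt Z i \<omega>)"
  by (simp add: Zobs_def unit_instrument_def unit_var_def)

locale binary_iv_sample = prob_space M for M :: "'a measure" +
  fixes L :: nat
    and Y0 Y1 :: "nat \<Rightarrow> 'a \<Rightarrow> real"
    and Dt :: "nat \<Rightarrow> 'a \<Rightarrow> (nat \<Rightarrow> bool) \<Rightarrow> bool"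
    and Z :: "nat \<Rightarrow> 'a \<Rightarrow> nat \<Rightarrow> bool"
  assumes instrument_support: "\<And>i \<omega>. Z i \<omega> \<in> zspace L"
    and units_indep: "indep_vars (\<lambda>_. unit_space) (unit_var Y0 Y1 Dt Z) UNIV"
    and units_ident: "\<And>i. distr M unit_space (unit_var Y0 Y1 Dt Z i) = distr M unit_space (unit_var Y0 Y1 Dt Z 0)"
    and outcome_integrable: "integrable M (Yobs Y0 Y1 Dt Z 0)"
    and pZ_pos: "\<And>l. l < L \<Longrightarrow> 0 < pZ M (Zobs Z 0) l"
    and piZ_pos: "\<And>l. l < L \<Longrightarrow> 0 < piZ M (Dobs Dt Z 0) (Zobs Z 0) l"
    and instruments_posdef: "posdef L (covZ M (Zobs Z 0))"
begin

lemma unit_var_measurable [measurable]: "unit_var Y0 Y1 Dt Z i \<in> measurable M unit_space"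
  using units_indep by (simp add: indep_vars_def)

lemma Yobs_eq: "Yobs Y0 Y1 Dt Z = (\<lambda>i \<omega>. unit_outcome L (unit_var Y0 Y1 Dt Z i \<omega>))"
  using instrument_support by (simp add: fun_eq_iff Yobs_eq_unit_outcome)

lemma Dobs_eq: "Dobs Dt Z = (\<lambda>i \<omega>. unit_treated L (unit_var Y0 Y1 Dt Z i \<omega>))"
  using instrument_support by (simp add: fun_eq_iff Dobs_eq_unit_treated)

lemma instrument_measurable [measurable]: "(\<lambda>\<omega>. Zobs Z 0 \<omega> l) \<in> borel_measurable M"
  unfolding Zobs_eq_unit_instrument[of Z _ _ _ Y0 Y1 Dt] by measurable

lemma instrument_binary: "Zobs Z 0 \<omega> l = 0 \<or> Zobs Z 0 \<omega> l = 1"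
  by (simp add: Zobs_def)

lemma treatment_integrable: "integrable M (Dobs Dt Z 0)"
proof (rule integrable_const_bound[where B=1])
  show "Dobs Dt Z 0 \<in> borel_measurable M"
    unfolding Dobs_eq by measurable
qed (simp add: Dobs_def)

lemma pZ_bounds:
  assumes "l < L"
  shows "0 < pZ M (Zobs Z 0) l" and "pZ M (Zobs Z 0) l < 1"
  using pZ_pos pZ_less_1[OF instruments_posdef assms instrument_measurable instrument_binary] assms
  by auto

lemma gammaZ_pos: "l < L \<Longrightarrow> 0 < gammaZ M (Dobs Dt Z 0) (Zobs Z 0) l"
  using piZ_pos pZ_bounds by (simp add: gammaZ_def)

lemma cov_treatment_instrument:
  "l < L \<Longrightarrow> cov M (Dobs Dt Z 0) (\<lambda>\<omega>. Zobs Z 0 \<omega> l) = gammaZ M (Dobs Dt Z 0) (Zobs Z 0) l"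
  using cov_binary_eq_diffZ[OF instrument_measurable instrument_binary treatment_integrable pZ_bounds]
  by (simp add: gammaZ_def piZ_def)

lemma cov_outcome_instrument:
  assumes "l < L"
  shows "cov M (Yobs Y0 Y1 Dt Z 0) (\<lambda>\<omega>. Zobs Z 0 \<omega> l)
    = wald M (Yobs Y0 Y1 Dt Z 0) (Dobs Dt Z 0) (Zobs Z 0) l * gammaZ M (Dobs Dt Z 0) (Zobs Z 0) l"
  using cov_binary_eq_diffZ[OF instrument_measurable instrument_binary outcome_integrable
      pZ_bounds[OF assms]] piZ_pos[OF assms]
  by (simp add: gammaZ_def wald_def rhoZ_def piZ_def)

lemma conv_in_prob_sample_cov_instrument:
  assumes "h \<in> borel_measurable unit_space" "integrable M (\<lambda>\<omega>. h (unit_var Y0 Y1 Dt Z 0 \<omega>))"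
  shows "conv_in_prob M (sample_cov (\<lambda>i \<omega>. h (unit_var Y0 Y1 Dt Z i \<omega>)) (\<lambda>i \<omega>. Zobs Z i \<omega> l))
    (cov M (\<lambda>\<omega>. h (unit_var Y0 Y1 Dt Z 0 \<omega>)) (\<lambda>\<omega>. Zobs Z 0 \<omega> l))"
  unfolding Zobs_eq_unit_instrument[of Z _ _ _ Y0 Y1 Dt]
  by (rule conv_in_prob_sample_cov_iid[OF units_indep units_ident assms(1) _ assms(2) abs_unit_instrument_le])
    measurable

lemma conv_in_prob_sample_cov_outcome:
  "conv_in_prob M (sample_cov (Yobs Y0 Y1 Dt Z) (\<lambda>i \<omega>. Zobs Z i \<omega> l))
    (cov M (Yobs Y0 Y1 Dt Z 0) (\<lambda>\<omega>. Zobs Z 0 \<omega> l))"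
  using conv_in_prob_sample_cov_instrument[OF unit_outcome_measurable] outcome_integrable
  by (simp add: Yobs_eq)

lemma conv_in_prob_sample_cov_treatment:
  assumes "l < L"
  shows "conv_in_prob M (sample_cov (Dobs Dt Z) (\<lambda>i \<omega>. Zobs Z i \<omega> l)) (gammaZ M (Dobs Dt Z 0) (Zobs Z 0) l)"
  using conv_in_prob_sample_cov_instrument[OF unit_treated_measurable[of L], of l] treatment_integrable
    cov_treatment_instrument[OF assms]
  by (simp add: Dobs_eq)

end

theorem proposition3:
  fixes M :: "'a measure" and L :: nat
    and Y0 Y1 :: "nat \<Rightarrow> 'a \<Rightarrow> real"
    and Dt :: "nat \<Rightarrow> 'a \<Rightarrow> (nat \<Rightarrow> bool) \<Rightarrow> bool"
    and Z :: "nat \<Rightarrow> 'a \<Rightarrow> nat \<Rightarrow> bool"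
    and W :: "nat \<Rightarrow> nat \<Rightarrow> real"
  assumes P: "prob_space M"
    and L2: "L \<ge> 2"
    and Zsupp: "\<forall>i \<omega>. Z i \<omega> \<in> zspace L"
    and Dtsupp: "\<forall>i \<omega> z. z \<notin> zspace L \<longrightarrow> \<not> Dt i \<omega> z"
    and iid_indep: "prob_space.indep_vars M (\<lambda>_. unit_space) (unit_var Y0 Y1 Dt Z) UNIV"
    and iid_ident: "\<forall>i. distr M unit_space (unit_var Y0 Y1 Dt Z i)
                       = distr M unit_space (unit_var Y0 Y1 Dt Z 0)"
    and intY: "integrable M (Yobs Y0 Y1 Dt Z 0)"
    and A1: "\<forall>i. indep_rv M ((borel \<Otimes>\<^sub>M borel) \<Otimes>\<^sub>M count_space UNIV)
                   (\<lambda>\<omega>. ((Y0 i \<omega>, Y1 i \<omega>), Dt i \<omega>)) (count_space UNIV) (Z i)"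
    and A2: "\<forall>i \<omega> z z'. z \<in> zspace L \<longrightarrow> z' \<in> zspace L \<longrightarrow> (\<forall>l. z l \<longrightarrow> z' l)
                \<longrightarrow> Dt i \<omega> z \<longrightarrow> Dt i \<omega> z'"
    and A3p: "\<forall>l<L. 0 < pZ M (Zobs Z 0) l"
    and A3pi: "\<forall>l<L. 0 < piZ M (Dobs Dt Z 0) (Zobs Z 0) l"
    and A3S: "posdef L (covZ M (Zobs Z 0))"
    and Wpd: "posdef L W"
  shows "conv_in_prob M (gmm_est L W (Yobs Y0 Y1 Dt Z) (Dobs Dt Z) (Zobs Z))
           (beta_star L W (gammaZ M (Dobs Dt Z 0) (Zobs Z 0))
                          (wald M (Yobs Y0 Y1 Dt Z 0) (Dobs Dt Z 0) (Zobs Z 0)))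
       \<and> (\<Sum>l<L. lam L W (gammaZ M (Dobs Dt Z 0) (Zobs Z 0)) l) = 1"
proof -
  interpret binary_iv_sample M L Y0 Y1 Dt Z
    by (rule binary_iv_sample.intro[OF P binary_iv_sample_axioms.intro])
      (use Zsupp iid_indep iid_ident intY A3p A3pi A3S in blast)+
  define G where "G = gammaZ M (Dobs Dt Z 0) (Zobs Z 0)"
  define C where "C l = cov M (Yobs Y0 Y1 Dt Z 0) (\<lambda>\<omega>. Zobs Z 0 \<omega> l)" for l
  have G_pos: "0 < qform L W G G"
    using posdef_qform_pos[OF Wpd, of 0 G] gammaZ_pos[of 0] L2 by (simp add: G_def)
  have "conv_in_prob M (gmm_est L W (Yobs Y0 Y1 Dt Z) (Dobs Dt Z) (Zobs Z)) (qform L W C G / qform L W G G)"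
    using conv_in_prob_sample_cov_outcome conv_in_prob_sample_cov_treatment G_pos unfolding C_def G_def
    by (rule conv_in_prob_gmm_est[OF P Wpd])
  moreover have "beta_star L W G (wald M (Yobs Y0 Y1 Dt Z 0) (Dobs Dt Z 0) (Zobs Z 0))
      = qform L W C G / qform L W G G"
    using cov_outcome_instrument by (intro beta_star_eq_qform) (simp add: C_def G_def)
  ultimately show ?thesis
    using sum_lam_eq_1[of L W G] G_pos by (simp add: G_def)
qed

end
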